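(* For an integer $n\geq 0$ and $z\in\mathbb{C}$, let $$\mathcal{T}_n(z) := \sum_{m=0}^n \binom{n}{m} m^m\,(n-m+z)^{n-m}$$ (with $0^0\equiv 1$). Then $$\mathcal{T}_n(z) = \sum_{k=0}^n a_k\, (z+ n +1)^k, \qquad a_k = \binom{n}{k}\,\mathcal{T}_{n-k}(k-n-1) = \binom{n}{k}\, d_{n-k},$$ where $d_j := \mathcal{T}_j(-j-1)$ for integers $j\geq 0$.
   Context: Convention: $0^0\equiv1$. The numbers $d_j=\mathcal{T}_j(-j-1)$ are the values of $\mathcal{T}_j$ at $-j-1$. *)

theory Defs
  imports Complex_Main
begin

text \<open>T_n(z) = sum_{m=0}^n (n choose m) m^m (n-m+z)^(n-m); note 0^0 = 1 in Isabelle.\<close>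
definition T :: "nat \<Rightarrow> complex \<Rightarrow> complex" where
  "T n z = (\<Sum>m=0..n. of_nat (n choose m) * of_nat m ^ m * (of_nat (n - m) + z) ^ (n - m))"

definition d :: "nat \<Rightarrow> complex" where
  "d j = T j (- of_nat j - 1)"

end

theory Submission
  imports Defs
begin

text \<open>Expand each power \<open>(n - m + w + y) ^ (n - m)\<close> in \<open>T n (w + y)\<close> binomially in \<open>y\<close> and
  exchange the two summations. By the identity
  \<open>(n choose m) * (n - m choose k) = (n choose k) * (n - k choose m)\<close>, the coefficient of \<open>y ^ k\<close>
  is \<open>n choose k\<close> times a sum of the same shape of length \<open>n - k\<close> with argument shifted by \<open>k\<close>:
  \<open>T n (w + y) = (\<Sum>k\<le>n. (n choose k) * T (n - k) (w + k) * y ^ k)\<close>. Nothing about the weights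
  \<open>m ^ m\<close> is used. Taking \<open>w = - n - 1\<close> gives the theorem.\<close>

lemma choose_mult_swap:
  "(n choose m) * (n - m choose k) = (n choose k) * (n - k choose m)"
proof (cases "m + k \<le> n")
  case True
  have "(n choose (n - m)) * (n - m choose k) = (n choose k) * (n - k choose (n - m - k))"
    using True by (intro choose_mult) auto
  moreover have "n choose (n - m) = n choose m"
    using True by (simp add: binomial_symmetric[symmetric])
  moreover have "n - k choose (n - m - k) = n - k choose m"
    using True binomial_symmetric[of m "n - k"] by (simp add: diff_commute add.commute)
  ultimately show ?thesis by simp
next
  case False
  then have lhs: "(n choose m) * (n - m choose k) = 0"
    and rhs: "(n choose k) * (n - k choose m) = 0"
    by (cases "m \<le> n"; cases "k \<le> n"; simp)+
  show ?thesis unfolding lhs rhs ..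
qed

lemma sum_atMost_triangle_swap:
  fixes n :: nat
  shows "(\<Sum>m\<le>n. \<Sum>k\<le>n - m. f m k) = (\<Sum>k\<le>n. \<Sum>m\<le>n - k. f m k)"
  unfolding sum.Sigma[OF finite_atMost ballI[OF finite_atMost]]
  by (rule sum.reindex_bij_witness[where i=prod.swap and j=prod.swap]) auto

lemma binomial_shift_sum:
  fixes c :: "nat \<Rightarrow> 'a::comm_ring_1"
  shows "(\<Sum>m\<le>n. of_nat (n choose m) * c m * (of_nat (n - m) + (w + y)) ^ (n - m))
       = (\<Sum>k\<le>n. of_nat (n choose k) * y ^ k *
            (\<Sum>m\<le>n - k. of_nat (n - k choose m) * c m * (of_nat (n - k - m) + (w + of_nat k)) ^ (n - k - m)))"
    (is "?lhs = ?rhs")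
proof -
  define g where "g m k = of_nat ((n choose m) * (n - m choose k)) * c m * y ^ k
      * (of_nat (n - m) + w) ^ (n - m - k)" for m k
  have "?lhs = (\<Sum>m\<le>n. \<Sum>k\<le>n - m. g m k)"
  proof (rule sum.cong[OF refl])
    fix m
    have "(of_nat (n - m) + (w + y)) ^ (n - m)
        = (\<Sum>k\<le>n - m. of_nat (n - m choose k) * y ^ k * (of_nat (n - m) + w) ^ (n - m - k))"
      using binomial_ring[of y "of_nat (n - m) + w" "n - m"] by (simp add: algebra_simps)
    then show "of_nat (n choose m) * c m * (of_nat (n - m) + (w + y)) ^ (n - m)
        = (\<Sum>k\<le>n - m. g m k)"
      by (simp add: sum_distrib_left g_def mult_ac)
  qed
  also have "\<dots> = (\<Sum>k\<le>n. \<Sum>m\<le>n - k. g m k)"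
    by (rule sum_atMost_triangle_swap)
  also have "\<dots> = ?rhs"
  proof (rule sum.cong[OF refl])
    fix k assume "k \<in> {..n}"
    have "g m k = of_nat (n choose k) * y ^ k *
        (of_nat (n - k choose m) * c m * (of_nat (n - k - m) + (w + of_nat k)) ^ (n - k - m))"
      if "m \<le> n - k" for m
    proof -
      from that \<open>k \<in> {..n}\<close> have "n - m = (n - k - m) + k" by simp
      then have "of_nat (n - m) + w = of_nat (n - k - m) + (w + of_nat k)"
        by (metis of_nat_add add.assoc add.commute)
      moreover have "n - m - k = n - k - m" by simp
      ultimately show ?thesis
        unfolding g_def choose_mult_swap of_nat_mult by (simp only: mult_ac)
    qed
    then show "(\<Sum>m\<le>n - k. g m k) = of_nat (n choose k) * y ^ k *
        (\<Sum>m\<le>n - k. of_nat (n - k choose m) * c m * (of_nat (n - k - m) + (w + of_nat k)) ^ (n - k - m))"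
      by (simp add: sum_distrib_left)
  qed
  finally show ?thesis .
qed

lemma T_shift:
  "T n (w + y) = (\<Sum>k=0..n. of_nat (n choose k) * T (n - k) (w + of_nat k) * y ^ k)"
  using binomial_shift_sum[of n "\<lambda>m. of_nat m ^ m" w y]
  by (simp add: T_def atLeast0AtMost mult_ac)

theorem proposition4:
  fixes n :: nat and z :: complex
  shows "T n z = (\<Sum>k=0..n. of_nat (n choose k) * T (n - k) (of_int (int k - int n - 1)) * (z + of_nat n + 1) ^ k)
    \<and> (\<forall>k\<in>{0..n}. of_nat (n choose k) * T (n - k) (of_int (int k - int n - 1)) = of_nat (n choose k) * d (n - k))"
proof
  have "T n z = T n ((- of_nat n - 1) + (z + of_nat n + 1))"
    by (simp add: algebra_simps)
  also have "\<dots> = (\<Sum>k=0..n. of_nat (n choose k) * T (n - k) ((- of_nat n - 1) + of_nat k) * (z + of_nat n + 1) ^ k)"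
    by (rule T_shift)
  also have "\<dots> = (\<Sum>k=0..n. of_nat (n choose k) * T (n - k) (of_int (int k - int n - 1)) * (z + of_nat n + 1) ^ k)"
    by (simp add: algebra_simps)
  finally show "T n z = \<dots>" .
next
  have "(of_int (int k - int n - 1) :: complex) = - of_nat (n - k) - 1" if "k \<le> n" for k
    using that by (simp add: of_nat_diff)
  then show "\<forall>k\<in>{0..n}. of_nat (n choose k) * T (n - k) (of_int (int k - int n - 1)) = of_nat (n choose k) * d (n - k)"
    by (simp add: d_def)
qed

end
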